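(* Let $n\geq 2$ and let $K\subset\mathbb{R}^n$ be a convex body with $\mathrm{r}_2(K)>0$. Then \[ \frac{\mathrm{R}_{n-1}(K)}{\mathrm{r}_2(K)}\leq 2\sqrt{2}\sqrt{\frac{n-1}{n}}. \]
   Context: A convex body is a compact convex subset of $\mathbb{R}^n$. For $1\le i\le n$, let $\mathcal{L}^n_i$ be the set of $i$-dimensional linear subspaces of $\mathbb{R}^n$, $K|L$ the orthogonal projection of $K$ onto $L$, $L^\perp$ the orthogonal complement. For a set $C$ contained in an affine subspace $A$, $\mathrm{R}(C;A)$ and $\mathrm{r}(C;A)$ denote the Euclidean circumradius and inradius of $C$ measured within $A$. Define $\mathrm{R}_i(K)=\min_{L\in\mathcal{L}^n_i}\mathrm{R}(K|L;L)$ and $\mathrm{r}_i(K)=\max_{L\in\mathcal{L}^n_i}\max_{x\in L^\perp}\mathrm{r}(K\cap(x+L);x+L)$. *)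

theory Defs
  imports "HOL-Analysis.Analysis"
begin

definition convex_body :: "'a::euclidean_space set \<Rightarrow> bool" where
  "convex_body K \<longleftrightarrow> compact K \<and> convex K"

definition lin_subspaces :: "nat \<Rightarrow> 'a::euclidean_space set set" where
  "lin_subspaces i = {L. subspace L \<and> dim L = i}"

definition orth_compl :: "'a::euclidean_space set \<Rightarrow> 'a set" where
  "orth_compl L = {x. \<forall>v\<in>L. inner x v = 0}"

definition proj_onto :: "'a::euclidean_space set \<Rightarrow> 'a set \<Rightarrow> 'a set" where
  "proj_onto K L = {y \<in> L. \<exists>x\<in>K. x - y \<in> orth_compl L}"

definition circumradius_in :: "'a::euclidean_space set \<Rightarrow> 'a set \<Rightarrow> real" where
  "circumradius_in C A = Inf {r. \<exists>c\<in>A. C \<subseteq> cball c r}"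

definition inradius_in :: "'a::euclidean_space set \<Rightarrow> 'a set \<Rightarrow> real" where
  "inradius_in C A = Sup {r. 0 \<le> r \<and> (\<exists>c\<in>A. cball c r \<inter> A \<subseteq> C)}"

definition outer_radius :: "nat \<Rightarrow> 'a::euclidean_space set \<Rightarrow> real" where
  "outer_radius i K = Inf ((\<lambda>L. circumradius_in (proj_onto K L) L) ` lin_subspaces i)"

definition inner_radius :: "nat \<Rightarrow> 'a::euclidean_space set \<Rightarrow> real" where
  "inner_radius i K = Sup {inradius_in (K \<inter> ((+) x ` L)) ((+) x ` L) | L x.
                            L \<in> lin_subspaces i \<and> x \<in> orth_compl L}"

end

theory Submission
  imports Defs
begin

text \<open>Let [a, b] be a diameter of K, of length D and direction u, and project K orthogonally
  onto the hyperplane H orthogonal to u. If p, q \<in> K have projections at distance w > 0, then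
  (1/2) [a, b] + (1/2) [p, q] \<subseteq> K is a parallelogram in a 2-plane containing a disc of radius
  w / 4, because the chord [p, q] is no longer than D. So the projection of K has diameter at
  most 4 r_2(K), and Jung's theorem in the (n - 1)-dimensional space H puts it into a ball of
  radius sqrt ((n - 1) / (2 n)) 4 r_2(K) = 2 sqrt 2 sqrt ((n - 1) / n) r_2(K). Jung's theorem
  itself comes from the minimal enclosing ball, whose centre is a convex combination of at most
  d + 1 of the farthest points.\<close>

section \<open>Jung's theorem\<close>

definition farthest_dist :: "'a::metric_space set \<Rightarrow> 'a \<Rightarrow> real" where
  "farthest_dist S x = Sup (dist x ` S)"

lemma farthest_dist_ge:
  assumes "bounded S" "s \<in> S"
  shows "dist x s \<le> farthest_dist S x"
proof -
  have "bounded (dist x ` S)"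
    using assms(1) bounded_dist_comp[of "\<lambda>_. x" S id] by (simp add: image_constant_conv)
  then show ?thesis
    unfolding farthest_dist_def using assms(2) by (intro cSup_upper bounded_imp_bdd_above) auto
qed

lemma farthest_dist_le:
  assumes "S \<noteq> {}" "\<And>s. s \<in> S \<Longrightarrow> dist x s \<le> r"
  shows "farthest_dist S x \<le> r"
  unfolding farthest_dist_def using assms by (intro cSup_least) auto

lemma farthest_dist_attained:
  assumes "compact S" "S \<noteq> {}"
  obtains s where "s \<in> S" "farthest_dist S x = dist x s"
proof -
  obtain s where s: "s \<in> S" "\<And>y. y \<in> S \<Longrightarrow> dist x y \<le> dist x s"
    using continuous_attains_sup[OF assms, of "dist x"] continuous_on_dist[OF continuous_on_const continuous_on_id]
    by blast
  have "farthest_dist S x = dist x s"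
    using farthest_dist_le[OF assms(2) s(2)] farthest_dist_ge[OF compact_imp_bounded[OF assms(1)] s(1)]
    by (meson order_antisym)
  with s(1) that show thesis by blast
qed

lemma farthest_dist_lipschitz:
  assumes "bounded S" "S \<noteq> {}"
  shows "1-lipschitz_on UNIV (farthest_dist S)"
proof (rule lipschitz_onI)
  have le: "farthest_dist S x \<le> dist x y + farthest_dist S y" for x y
    using assms by (intro farthest_dist_le)
      (auto intro: order_trans[OF dist_triangle] add_left_mono farthest_dist_ge)
  show "dist (farthest_dist S x) (farthest_dist S y) \<le> 1 * dist x y" for x y
    using le[of x y] le[of y x] by (simp add: dist_real_def dist_commute abs_le_iff)
qed simp

lemma farthest_dist_has_minimizer:
  fixes S :: "'a::heine_borel set"
  assumes "compact S" "S \<noteq> {}"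
  obtains c where "\<And>y. farthest_dist S c \<le> farthest_dist S y"
proof -
  obtain s0 where s0: "s0 \<in> S" using assms(2) by blast
  define r where "r = farthest_dist S s0"
  have r0: "0 \<le> r"
    unfolding r_def using farthest_dist_ge[OF compact_imp_bounded[OF assms(1)] s0, of s0] by simp
  have "continuous_on (cball s0 r) (farthest_dist S)"
    using farthest_dist_lipschitz[OF compact_imp_bounded[OF assms(1)] assms(2)]
    by (meson continuous_on_subset lipschitz_on_continuous_on subset_UNIV)
  then obtain c where c: "\<And>y. y \<in> cball s0 r \<Longrightarrow> farthest_dist S c \<le> farthest_dist S y"
    using continuous_attains_inf[of "cball s0 r" "farthest_dist S"] r0 by fastforce
  \<comment> \<open>Outside the ball, the distance to s0 alone already exceeds the value at s0.\<close>
  have "farthest_dist S c \<le> farthest_dist S y" for y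
  proof (cases "y \<in> cball s0 r")
    case False
    then have "r < dist y s0" by (simp add: dist_commute)
    also have "\<dots> \<le> farthest_dist S y" by (rule farthest_dist_ge[OF compact_imp_bounded[OF assms(1)] s0])
    finally show ?thesis using c[of s0] r0 unfolding r_def by simp
  qed (use c in auto)
  then show thesis by (rule that)
qed

lemma dist_step_towards_lt:
  fixes a c s :: "'a::real_inner"
  assumes "0 < t" "t * (norm a)\<^sup>2 < 2 * (a \<bullet> (s - c))"
  shows "dist (c + t *\<^sub>R a) s < dist c s"
proof -
  have "(dist (c + t *\<^sub>R a) s)\<^sup>2 = (dist c s)\<^sup>2 - t * (2 * (a \<bullet> (s - c)) - t * (norm a)\<^sup>2)"
    unfolding dist_norm power2_norm_eq_inner
    by (simp add: inner_diff_left inner_diff_right inner_add_left inner_add_right inner_commute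
        algebra_simps power2_eq_square)
  also have "\<dots> < (dist c s)\<^sup>2" using assms by simp
  finally show ?thesis by (simp add: power2_less_imp_less)
qed

lemma compact_dist_lt_uniform:
  assumes "compact S" "\<And>s. s \<in> S \<Longrightarrow> dist c s < R"
  obtains R1 where "R1 < R" "\<And>s. s \<in> S \<Longrightarrow> dist c s \<le> R1"
proof (cases "S = {}")
  case False
  then obtain s1 where "s1 \<in> S" "farthest_dist S c = dist c s1"
    using farthest_dist_attained[OF assms(1)] by blast
  moreover have "dist c s \<le> farthest_dist S c" if "s \<in> S" for s
    using farthest_dist_ge[OF compact_imp_bounded[OF assms(1)] that] .
  ultimately show thesis using that[of "farthest_dist S c"] assms(2) by simp
qed (rule that[of "R - 1"], auto)

lemma farthest_dist_descent:
  fixes S :: "'a::euclidean_space set"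
  assumes S: "compact S" "S \<noteq> {}"
    and ab: "a \<bullet> c < b" "\<And>s. s \<in> S \<Longrightarrow> dist c s = farthest_dist S c \<Longrightarrow> b < a \<bullet> s"
  obtains c' where "farthest_dist S c' < farthest_dist S c"
proof -
  define R where "R = farthest_dist S c"
  have RS: "dist c s \<le> R" if "s \<in> S" for s
    unfolding R_def using farthest_dist_ge[OF compact_imp_bounded[OF S(1)] that] .
  define \<eta> where "\<eta> = b - a \<bullet> c"
  have \<eta>: "0 < \<eta>" using ab(1) unfolding \<eta>_def by simp
  define S1 where "S1 = {s \<in> S. a \<bullet> s \<le> a \<bullet> c + \<eta> / 2}"
  have "S1 = S \<inter> {s. a \<bullet> s \<le> a \<bullet> c + \<eta> / 2}" unfolding S1_def by blast
  then have "compact S1" using compact_Int_closed[OF S(1) closed_halfspace_le] by simp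
  \<comment> \<open>The points of S near the separating hyperplane keep a uniform distance below R from c.\<close>
  have near: "dist c s < R" if "s \<in> S1" for s
  proof -
    have "a \<bullet> s < b" using that \<eta> unfolding S1_def \<eta>_def by (simp add: field_simps)
    then have "dist c s \<noteq> R" using ab(2) that unfolding S1_def R_def by fastforce
    then show ?thesis using RS that unfolding S1_def by fastforce
  qed
  obtain R1 where R1: "R1 < R" "\<And>s. s \<in> S1 \<Longrightarrow> dist c s \<le> R1"
    using compact_dist_lt_uniform[OF \<open>compact S1\<close> near] by blast
  obtain s0 where "s0 \<in> S" "farthest_dist S c = dist c s0" using farthest_dist_attained[OF S] .
  then have a: "0 < norm a" using ab by fastforce
  define t where "t = min (\<eta> / (norm a)\<^sup>2) ((R - R1) / (2 * norm a))"
  have "0 < t" using a \<eta> R1(1) unfolding t_def by simp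
  moreover have "t \<le> \<eta> / (norm a)\<^sup>2" "t \<le> (R - R1) / 2 / norm a"
    unfolding t_def by auto
  then have "t * (norm a)\<^sup>2 \<le> \<eta>" "t * norm a \<le> (R - R1) / 2"
    using a by (simp_all add: pos_le_divide_eq)
  ultimately have t: "0 < t" "t * (norm a)\<^sup>2 \<le> \<eta>" "t * norm a < R - R1"
    using R1(1) by auto
  have "dist (c + t *\<^sub>R a) s < R" if s: "s \<in> S" for s
  proof (cases "s \<in> S1")
    case True
    have "dist (c + t *\<^sub>R a) s \<le> t * norm a + dist c s"
      using dist_triangle[of "c + t *\<^sub>R a" s c] t(1) by (simp add: dist_norm)
    then show ?thesis using R1(2)[OF True] t(3) by linarith
  next
    case False
    then have "t * (norm a)\<^sup>2 < 2 * (a \<bullet> (s - c))"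
      using s t(2) \<eta> unfolding S1_def by (auto simp: inner_diff_right)
    then show ?thesis using dist_step_towards_lt[OF t(1)] RS[OF s] by (meson order_less_le_trans)
  qed
  moreover obtain s' where "s' \<in> S" "farthest_dist S (c + t *\<^sub>R a) = dist (c + t *\<^sub>R a) s'"
    using farthest_dist_attained[OF S] .
  ultimately have "farthest_dist S (c + t *\<^sub>R a) < farthest_dist S c" unfolding R_def by simp
  then show thesis by (rule that)
qed

lemma farthest_dist_minimizer_in_convex_hull:
  fixes S :: "'a::euclidean_space set"
  assumes S: "compact S" "S \<noteq> {}" and min: "\<And>y. farthest_dist S c \<le> farthest_dist S y"
  shows "c \<in> convex hull {s \<in> S. dist c s = farthest_dist S c}"
proof (rule ccontr)
  define T where "T = {s \<in> S. dist c s = farthest_dist S c}"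
  assume c: "c \<notin> convex hull T"
  have "T = S \<inter> sphere c (farthest_dist S c)" unfolding T_def by auto
  then have "compact T" using compact_Int_closed[OF S(1) closed_sphere] by simp
  then obtain a b where ab: "a \<bullet> c < b" "\<And>x. x \<in> convex hull T \<Longrightarrow> b < a \<bullet> x"
    using separating_hyperplane_closed_point[OF convex_convex_hull
        compact_imp_closed[OF compact_convex_hull] c] by blast
  have "b < a \<bullet> s" if "s \<in> S" "dist c s = farthest_dist S c" for s
    using ab(2) hull_subset[of T convex] that unfolding T_def by blast
  then obtain c' where "farthest_dist S c' < farthest_dist S c"
    using farthest_dist_descent[OF S ab(1)] by blast
  with min show False by (simp add: not_less[symmetric])
qed

lemma weighted_sum_sq_dist_pairs:
  fixes F :: "'a::real_inner set"
  assumes "sum l F = 1" "(\<Sum>x\<in>F. l x *\<^sub>R x) = c" "\<And>x. x \<in> F \<Longrightarrow> dist x c = R"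
  shows "(\<Sum>x\<in>F. \<Sum>y\<in>F. l x * l y * (dist x y)\<^sup>2) = 2 * R\<^sup>2"
proof -
  have centred: "(\<Sum>x\<in>F. l x *\<^sub>R (x - c)) = 0"
    using assms(1,2) by (simp add: scaleR_diff_right sum_subtractf flip: scaleR_left.sum)
  have polar: "(dist x y)\<^sup>2 = 2 * R\<^sup>2 - 2 * ((x - c) \<bullet> (y - c))" if "x \<in> F" "y \<in> F" for x y
  proof -
    have "(dist x y)\<^sup>2 = (norm (x - c))\<^sup>2 + (norm (y - c))\<^sup>2 - 2 * ((x - c) \<bullet> (y - c))"
      by (simp add: dist_norm power2_norm_eq_inner inner_diff_left inner_diff_right inner_commute)
    then show ?thesis using assms(3) that by (simp add: dist_norm)
  qed
  have "(\<Sum>x\<in>F. \<Sum>y\<in>F. l x * l y * (dist x y)\<^sup>2)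
      = (\<Sum>x\<in>F. \<Sum>y\<in>F. l x * l y * (2 * R\<^sup>2) - 2 * (l x * l y * ((x - c) \<bullet> (y - c))))"
    by (intro sum.cong refl) (simp add: polar algebra_simps)
  also have "\<dots> = (\<Sum>x\<in>F. \<Sum>y\<in>F. l x * l y * (2 * R\<^sup>2))
      - 2 * (\<Sum>x\<in>F. \<Sum>y\<in>F. l x * l y * ((x - c) \<bullet> (y - c)))"
    by (simp add: sum_subtractf sum_distrib_left)
  also have "(\<Sum>x\<in>F. \<Sum>y\<in>F. l x * l y * ((x - c) \<bullet> (y - c)))
      = (\<Sum>x\<in>F. l x *\<^sub>R (x - c)) \<bullet> (\<Sum>y\<in>F. l y *\<^sub>R (y - c))"
    unfolding inner_sum_left inner_sum_right
    by (simp add: mult.assoc) (subst sum.swap, simp add: mult.left_commute)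
  also have "(\<Sum>x\<in>F. \<Sum>y\<in>F. l x * l y * (2 * R\<^sup>2)) = 2 * R\<^sup>2"
    using assms(1) by (simp flip: sum_distrib_left sum_distrib_right)
  finally show ?thesis using centred by simp
qed

lemma inverse_card_le_sum_sq:
  assumes "finite F" "card F \<le> m" "0 < m" "sum l F = 1"
  shows "1 / real m \<le> (\<Sum>x\<in>F. (l x)\<^sup>2)"
proof -
  have "1 = (\<Sum>x\<in>F. 1 * l x)\<^sup>2" using assms(4) by simp
  also have "\<dots> \<le> (\<Sum>x\<in>F. 1\<^sup>2) * (\<Sum>x\<in>F. (l x)\<^sup>2)" by (rule Cauchy_Schwarz_ineq_sum)
  also have "\<dots> \<le> real m * (\<Sum>x\<in>F. (l x)\<^sup>2)"
    using assms(2) by (intro mult_right_mono) (auto intro: sum_nonneg)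
  finally show ?thesis using assms(3) by (simp add: field_simps)
qed

lemma jung_inequality_finite:
  fixes F :: "'a::real_inner set"
  assumes "finite F" "card F \<le> m" "0 < m"
    and "\<And>x. x \<in> F \<Longrightarrow> 0 \<le> l x" "sum l F = 1" "(\<Sum>x\<in>F. l x *\<^sub>R x) = c"
    and "\<And>x. x \<in> F \<Longrightarrow> dist x c = R" "\<And>x y. x \<in> F \<Longrightarrow> y \<in> F \<Longrightarrow> dist x y \<le> D"
  shows "2 * R\<^sup>2 \<le> D\<^sup>2 * (1 - 1 / real m)"
proof -
  \<comment> \<open>Off the diagonal each squared distance is at most D^2; on it, it vanishes.\<close>
  have "l x * l y * (dist x y)\<^sup>2 \<le> l x * l y * (D\<^sup>2 - (if x = y then D\<^sup>2 else 0))"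
    if "x \<in> F" "y \<in> F" for x y
  proof (intro mult_left_mono)
    show "(dist x y)\<^sup>2 \<le> D\<^sup>2 - (if x = y then D\<^sup>2 else 0)"
      using assms(8)[OF that] by (auto intro: power_mono)
  qed (use assms(4) that in simp)
  then have "(\<Sum>x\<in>F. \<Sum>y\<in>F. l x * l y * (dist x y)\<^sup>2)
      \<le> (\<Sum>x\<in>F. \<Sum>y\<in>F. l x * l y * (D\<^sup>2 - (if x = y then D\<^sup>2 else 0)))"
    by (intro sum_mono) auto
  then have "2 * R\<^sup>2 \<le> (\<Sum>x\<in>F. \<Sum>y\<in>F. l x * l y * (D\<^sup>2 - (if x = y then D\<^sup>2 else 0)))"
    by (simp only: weighted_sum_sq_dist_pairs[OF assms(5-7)])
  also have "\<dots> = (\<Sum>x\<in>F. l x * D\<^sup>2 - (l x)\<^sup>2 * D\<^sup>2)"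
  proof (rule sum.cong[OF refl])
    fix x assume "x \<in> F"
    have "(\<Sum>y\<in>F. l x * l y * (D\<^sup>2 - (if x = y then D\<^sup>2 else 0)))
        = (\<Sum>y\<in>F. l x * l y * D\<^sup>2) - (\<Sum>y\<in>F. if x = y then l x * l y * D\<^sup>2 else 0)"
      unfolding sum_subtractf[symmetric] by (rule sum.cong) auto
    also have "\<dots> = l x * D\<^sup>2 - (l x)\<^sup>2 * D\<^sup>2"
      using \<open>x \<in> F\<close> assms(1,5)
      by (simp add: power2_eq_square flip: sum_distrib_left sum_distrib_right)
    finally show "(\<Sum>y\<in>F. l x * l y * (D\<^sup>2 - (if x = y then D\<^sup>2 else 0))) = l x * D\<^sup>2 - (l x)\<^sup>2 * D\<^sup>2" .
  qed
  also have "\<dots> = D\<^sup>2 * (1 - (\<Sum>x\<in>F. (l x)\<^sup>2))"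
    using assms(5) by (simp add: sum_subtractf sum_distrib_left algebra_simps flip: sum_distrib_right)
  also have "\<dots> \<le> D\<^sup>2 * (1 - 1 / real m)"
    using inverse_card_le_sum_sq[OF assms(1-3,5)] by (intro mult_left_mono) auto
  finally show ?thesis .
qed

lemma radius_le_of_jung_inequality:
  assumes "2 * R\<^sup>2 \<le> D\<^sup>2 * (1 - 1 / real (d + 1))" "0 \<le> D"
  shows "R \<le> sqrt (real d / (2 * (real d + 1))) * D"
proof -
  define x where "x = real d / (2 * (real d + 1))"
  have "D\<^sup>2 * (1 - 1 / real (d + 1)) = 2 * (x * D\<^sup>2)" unfolding x_def by (simp add: field_simps)
  then have "R\<^sup>2 \<le> x * D\<^sup>2" using assms(1) by linarith
  also have "x * D\<^sup>2 = (sqrt x * D)\<^sup>2" unfolding x_def by (simp add: power_mult_distrib)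
  finally have "R\<^sup>2 \<le> (sqrt x * D)\<^sup>2" .
  then show ?thesis unfolding x_def by (rule power2_le_imp_le) (use assms(2) in simp)
qed

theorem jung:
  fixes S :: "'a::euclidean_space set"
  assumes S: "compact S" "S \<noteq> {}" and dim: "aff_dim S \<le> int d"
    and diam: "\<forall>x\<in>S. \<forall>y\<in>S. dist x y \<le> D"
  obtains c where "c \<in> convex hull S" "\<And>s. s \<in> S \<Longrightarrow> dist c s \<le> sqrt (real d / (2 * (real d + 1))) * D"
proof -
  obtain c where min: "\<And>y. farthest_dist S c \<le> farthest_dist S y"
    using farthest_dist_has_minimizer[OF S] by blast
  define R where "R = farthest_dist S c"
  define T where "T = {s \<in> S. dist c s = R}"
  have "T \<subseteq> S" unfolding T_def by blast
  have "c \<in> convex hull T"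
    unfolding T_def R_def using farthest_dist_minimizer_in_convex_hull[OF S min] .
  then obtain F where F: "finite F" "F \<subseteq> T" "card F \<le> aff_dim T + 1" "c \<in> convex hull F"
    unfolding caratheodory_aff_dim[of T] by blast
  have "aff_dim T \<le> int d" using aff_dim_subset[OF \<open>T \<subseteq> S\<close>] dim by linarith
  then have card: "card F \<le> d + 1" using F(3) by linarith
  obtain l where l: "\<And>x. x \<in> F \<Longrightarrow> 0 \<le> l x" "sum l F = 1" "(\<Sum>x\<in>F. l x *\<^sub>R x) = c"
    using F(4) convex_hull_finite[OF F(1)] by auto
  have RF: "dist x c = R" if "x \<in> F" for x
    using F(2) that unfolding T_def by (auto simp: dist_commute)
  have DF: "dist x y \<le> D" if "x \<in> F" "y \<in> F" for x y
    using F(2) \<open>T \<subseteq> S\<close> that diam by blast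
  obtain s0 where "s0 \<in> S" using S(2) by blast
  then have "0 \<le> D" using diam by force
  have "2 * R\<^sup>2 \<le> D\<^sup>2 * (1 - 1 / real (d + 1))"
    using jung_inequality_finite[OF F(1) card _ l RF DF] by simp
  then have R_le: "R \<le> sqrt (real d / (2 * (real d + 1))) * D"
    using \<open>0 \<le> D\<close> by (rule radius_le_of_jung_inequality)
  show thesis
  proof (rule that)
    show "c \<in> convex hull S" using hull_mono[OF \<open>T \<subseteq> S\<close>] \<open>c \<in> convex hull T\<close> ..
    show "dist c s \<le> sqrt (real d / (2 * (real d + 1))) * D" if "s \<in> S" for s
      using farthest_dist_ge[OF compact_imp_bounded[OF S(1)] that, of c] R_le unfolding R_def
      by (rule order_trans)
  qed
qed

section \<open>Radii within linear subspaces\<close>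

lemma orth_compl_decomposition:
  assumes "subspace L"
  obtains y where "y \<in> L" "x - y \<in> orth_compl L"
proof -
  obtain y z where yz: "y \<in> span L" "\<And>w. w \<in> span L \<Longrightarrow> orthogonal z w" "x = y + z"
    using orthogonal_subspace_decomp_exists[of L x] by metis
  have "y \<in> L" using yz(1) assms by (metis span_eq_iff)
  moreover have "x - y \<in> orth_compl L"
    unfolding orth_compl_def using yz(2,3) span_superset by (fastforce simp: orthogonal_def)
  ultimately show thesis by (rule that)
qed

lemma proj_onto_nonempty:
  assumes "subspace L" "x \<in> K"
  shows "proj_onto K L \<noteq> {}"
  using orth_compl_decomposition[OF assms(1), of x] assms(2) unfolding proj_onto_def by blast

lemma norm_le_of_proj_onto:
  assumes "y \<in> proj_onto K L"
  obtains x where "x \<in> K" "norm y \<le> norm x"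
proof -
  obtain x where x: "x \<in> K" "y \<in> L" "x - y \<in> orth_compl L"
    using assms unfolding proj_onto_def by blast
  have "orthogonal y (x - y)"
    using x(2,3) unfolding orth_compl_def orthogonal_def by (simp add: inner_commute)
  then have "(norm x)\<^sup>2 = (norm y)\<^sup>2 + (norm (x - y))\<^sup>2"
    using norm_add_Pythagorean[of y "x - y"] by simp
  then have "norm y \<le> norm x" using power2_le_imp_le[of "norm y" "norm x"] by simp
  with x(1) that show thesis by blast
qed

lemma bounded_proj_onto:
  assumes "bounded K"
  shows "bounded (proj_onto K L)"
proof -
  obtain B where B: "\<And>x. x \<in> K \<Longrightarrow> norm x \<le> B" using assms bounded_iff by blast
  have "norm y \<le> B" if y: "y \<in> proj_onto K L" for y
  proof -
    obtain x where "x \<in> K" "norm y \<le> norm x" using norm_le_of_proj_onto[OF y] .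
    then show ?thesis using B[of x] by linarith
  qed
  then show ?thesis unfolding bounded_iff by blast
qed

lemma radius_nonneg_of_subset_cball:
  assumes "C \<noteq> {}" "C \<subseteq> cball c r"
  shows "0 \<le> r"
proof -
  obtain x where "x \<in> C" using assms(1) by blast
  then have "dist c x \<le> r" using assms(2) by auto
  then show ?thesis using zero_le_dist[of c x] by linarith
qed

lemma circumradius_in_le:
  assumes "c \<in> A" "C \<noteq> {}" "C \<subseteq> cball c r"
  shows "circumradius_in C A \<le> r"
  unfolding circumradius_in_def
proof (rule cInf_lower)
  show "r \<in> {r. \<exists>c\<in>A. C \<subseteq> cball c r}" using assms by blast
  show "bdd_below {r. \<exists>c\<in>A. C \<subseteq> cball c r}"
  proof (rule bdd_belowI)
    fix r' assume "r' \<in> {r. \<exists>c\<in>A. C \<subseteq> cball c r}"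
    then obtain c' where "C \<subseteq> cball c' r'" by blast
    then show "0 \<le> r'" by (rule radius_nonneg_of_subset_cball[OF assms(2)])
  qed
qed

lemma circumradius_in_nonneg:
  assumes "A \<noteq> {}" "C \<noteq> {}" "bounded C"
  shows "0 \<le> circumradius_in C A"
  unfolding circumradius_in_def
proof (rule cInf_greatest)
  obtain c where "c \<in> A" using assms(1) by blast
  moreover obtain r where "C \<subseteq> cball c r"
    using assms(3) unfolding bounded_any_center[of C c] subset_iff mem_cball by blast
  ultimately show "{r. \<exists>c\<in>A. C \<subseteq> cball c r} \<noteq> {}" by blast
next
  fix r assume "r \<in> {r. \<exists>c\<in>A. C \<subseteq> cball c r}"
  then obtain c where "C \<subseteq> cball c r" by blast
  then show "0 \<le> r" by (rule radius_nonneg_of_subset_cball[OF assms(2)])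
qed

lemma outer_radius_le:
  assumes "K \<noteq> {}" "bounded K" "H \<in> lin_subspaces i" "c \<in> H" "proj_onto K H \<subseteq> cball c r"
  shows "outer_radius i K \<le> r"
proof -
  have proj_ne: "proj_onto K L \<noteq> {}" if "L \<in> lin_subspaces i" for L
    using that assms(1) proj_onto_nonempty unfolding lin_subspaces_def by blast
  have "outer_radius i K \<le> circumradius_in (proj_onto K H) H"
    unfolding outer_radius_def
  proof (rule cInf_lower)
    show "bdd_below ((\<lambda>L. circumradius_in (proj_onto K L) L) ` lin_subspaces i)"
    proof (rule bdd_belowI2)
      fix L :: "'a set" assume L: "L \<in> lin_subspaces i"
      then have "L \<noteq> {}" unfolding lin_subspaces_def using subspace_0 by blast
      then show "0 \<le> circumradius_in (proj_onto K L) L"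
        using circumradius_in_nonneg proj_ne[OF L] bounded_proj_onto[OF assms(2)] by blast
    qed
  qed (use assms(3) in blast)
  also have "\<dots> \<le> r" using circumradius_in_le[OF assms(4) proj_ne[OF assms(3)] assms(5)] .
  finally show ?thesis .
qed

lemma lin_subspaces_obtain_nonzero:
  assumes "L \<in> lin_subspaces i" "0 < i"
  obtains v where "v \<in> L" "v \<noteq> 0"
proof -
  have "\<not> L \<subseteq> {0}" using assms dim_eq_0[of L] unfolding lin_subspaces_def by auto
  with that show thesis by blast
qed

lemma radius_le_of_cball_slice_subset:
  fixes K :: "'a::euclidean_space set"
  assumes "subspace L" "v \<in> L" "v \<noteq> 0" "\<forall>y\<in>K. \<forall>z\<in>K. dist y z \<le> D"
    and "0 \<le> r" "c \<in> (+) x ` L" "cball c r \<inter> (+) x ` L \<subseteq> K"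
  shows "r \<le> D"
proof -
  obtain l where l: "l \<in> L" "c = x + l" using assms(6) by blast
  define c' where "c' = c + (r / norm v) *\<^sub>R v"
  have "c' = x + (l + (r / norm v) *\<^sub>R v)" unfolding c'_def l by simp
  moreover have "l + (r / norm v) *\<^sub>R v \<in> L"
    using assms(1,2) l(1) by (simp add: subspace_add subspace_scale)
  moreover have dc: "dist c c' = r" unfolding c'_def using assms(3,5) by (simp add: dist_norm)
  ultimately have "c' \<in> K" using assms(7) by auto
  moreover have "c \<in> K" using assms(5-7) by auto
  ultimately show ?thesis using assms(4) dc by metis
qed

text \<open>When no ball fits, inradius_in is the unspecified real Sup {}; hence the bound max D (Sup {}).\<close>
lemma inradius_in_slice_le:
  assumes "L \<in> lin_subspaces 2" "\<forall>y\<in>K. \<forall>z\<in>K. dist y z \<le> D"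
  shows "inradius_in (K \<inter> (+) x ` L) ((+) x ` L) \<le> max D (Sup {})"
proof (cases "{r. 0 \<le> r \<and> (\<exists>c\<in>(+) x ` L. cball c r \<inter> (+) x ` L \<subseteq> K \<inter> (+) x ` L)} = {}")
  case False
  obtain v where v: "v \<in> L" "v \<noteq> 0" using lin_subspaces_obtain_nonzero[OF assms(1)] by auto
  have "subspace L" using assms(1) unfolding lin_subspaces_def by blast
  have "r \<le> D" if "0 \<le> r" "c \<in> (+) x ` L" "cball c r \<inter> (+) x ` L \<subseteq> K" for r c
    by (rule radius_le_of_cball_slice_subset[OF \<open>subspace L\<close> v]) (use assms(2) that in auto)
  then have "inradius_in (K \<inter> (+) x ` L) ((+) x ` L) \<le> D"
    unfolding inradius_in_def by (intro cSup_least[OF False]) auto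
  then show ?thesis by simp
qed (simp only: inradius_in_def max.cobounded2)

lemma inner_radius_ge:
  assumes "\<forall>y\<in>K. \<forall>z\<in>K. dist y z \<le> D"
    and "L \<in> lin_subspaces 2" "x \<in> orth_compl L"
    and "0 \<le> r" "c \<in> (+) x ` L" "cball c r \<inter> (+) x ` L \<subseteq> K"
  shows "r \<le> inner_radius 2 K"
proof -
  obtain v where v: "v \<in> L" "v \<noteq> 0" using lin_subspaces_obtain_nonzero[OF assms(2)] by auto
  have "subspace L" using assms(2) unfolding lin_subspaces_def by blast
  have "r \<le> inradius_in (K \<inter> (+) x ` L) ((+) x ` L)"
    unfolding inradius_in_def
  proof (rule cSup_upper)
    show "r \<in> {r. 0 \<le> r \<and> (\<exists>c\<in>(+) x ` L. cball c r \<inter> (+) x ` L \<subseteq> K \<inter> (+) x ` L)}"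
      using assms(4-6) by blast
    show "bdd_above {r. 0 \<le> r \<and> (\<exists>c\<in>(+) x ` L. cball c r \<inter> (+) x ` L \<subseteq> K \<inter> (+) x ` L)}"
    proof (rule bdd_aboveI)
      fix r assume "r \<in> {r. 0 \<le> r \<and> (\<exists>c\<in>(+) x ` L. cball c r \<inter> (+) x ` L \<subseteq> K \<inter> (+) x ` L)}"
      then show "r \<le> D"
        using radius_le_of_cball_slice_subset[OF \<open>subspace L\<close> v assms(1)] by blast
    qed
  qed
  also have "\<dots> \<le> inner_radius 2 K"
    unfolding inner_radius_def
  proof (rule cSup_upper)
    show "bdd_above {inradius_in (K \<inter> (+) x ` L) ((+) x ` L) |L x. L \<in> lin_subspaces 2 \<and> x \<in> orth_compl L}"
      using inradius_in_slice_le[OF _ assms(1)] by (intro bdd_aboveI[of _ "max D (Sup {})"]) blast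
  qed (use assms(2,3) in blast)
  finally show ?thesis .
qed

section \<open>Discs in parallelograms\<close>

lemma orthonormal_pair_span_expansion:
  fixes u e :: "'a::real_inner"
  assumes "norm u = 1" "norm e = 1" "u \<bullet> e = 0" "v \<in> span {u, e}"
  shows "v = (v \<bullet> u) *\<^sub>R u + (v \<bullet> e) *\<^sub>R e"
proof -
  define r where "r = v - (v \<bullet> u) *\<^sub>R u - (v \<bullet> e) *\<^sub>R e"
  have "u \<bullet> u = 1" "e \<bullet> e = 1" "e \<bullet> u = 0"
    using assms(1-3) by (simp_all add: norm_eq_1 inner_commute)
  then have "orthogonal r u" "orthogonal r e"
    unfolding r_def orthogonal_def using assms(3) by (simp_all add: inner_diff_left)
  moreover have "r \<in> span {u, e}" unfolding r_def
    by (intro span_diff span_scale span_base assms(4)) auto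
  ultimately have "orthogonal r r" by (auto intro: orthogonal_to_span[of r "{u, e}"])
  then have "r = 0" by (simp add: orthogonal_def)
  then show ?thesis unfolding r_def by (simp add: algebra_simps)
qed

lemma span_orthonormal_pair_in_lin_subspaces:
  fixes u e :: "'a::euclidean_space"
  assumes "norm u = 1" "norm e = 1" "u \<bullet> e = 0"
  shows "span {u, e} \<in> lin_subspaces 2"
proof -
  have "independent {u, e}"
    using assms by (intro pairwise_orthogonal_independent)
      (auto simp: pairwise_def orthogonal_def inner_commute)
  moreover have "u \<noteq> e" using assms by auto
  ultimately show ?thesis unfolding lin_subspaces_def by (simp add: dim_eq_card_independent)
qed

lemma parallelogram_coordinates_bound:
  fixes \<alpha> \<beta> \<gamma> \<delta> D :: real
  assumes "0 < \<delta>" "0 \<le> D" "\<gamma>\<^sup>2 + \<delta>\<^sup>2 \<le> D\<^sup>2" "\<alpha>\<^sup>2 + \<beta>\<^sup>2 \<le> (\<delta> / 4)\<^sup>2"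
  shows "\<bar>\<beta>\<bar> \<le> \<delta> / 4" "\<bar>\<alpha> - \<beta> / \<delta> * \<gamma>\<bar> \<le> D / 4"
proof -
  have "\<beta>\<^sup>2 \<le> (\<delta> / 4)\<^sup>2" using assms(4) zero_le_power2[of \<alpha>] by linarith
  then have "\<bar>\<beta>\<bar>\<^sup>2 \<le> (\<delta> / 4)\<^sup>2" by simp
  then show "\<bar>\<beta>\<bar> \<le> \<delta> / 4" by (rule power2_le_imp_le) (use assms(1) in simp)
  \<comment> \<open>Cauchy-Schwarz for the vectors (|\<alpha>|, |\<beta>|) and (\<delta>, |\<gamma>|).\<close>
  have "(\<bar>\<alpha>\<bar> * \<delta> + \<bar>\<beta>\<bar> * \<bar>\<gamma>\<bar>)\<^sup>2 \<le> (\<alpha>\<^sup>2 + \<beta>\<^sup>2) * (\<delta>\<^sup>2 + \<gamma>\<^sup>2)"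
    using zero_le_power2[of "\<bar>\<alpha>\<bar> * \<bar>\<gamma>\<bar> - \<bar>\<beta>\<bar> * \<delta>"] by (simp add: power2_eq_square algebra_simps)
  also have "\<dots> \<le> (\<delta> / 4)\<^sup>2 * D\<^sup>2"
    using assms(3,4) by (intro mult_mono) auto
  also have "\<dots> = (\<delta> * D / 4)\<^sup>2" by (simp add: power2_eq_square)
  finally have "\<bar>\<alpha>\<bar> * \<delta> + \<bar>\<beta>\<bar> * \<bar>\<gamma>\<bar> \<le> \<delta> * D / 4"
    by (rule power2_le_imp_le) (use assms(1,2) in simp)
  then have "\<bar>\<alpha>\<bar> + \<bar>\<beta>\<bar> / \<delta> * \<bar>\<gamma>\<bar> \<le> D / 4"
    using assms(1) by (simp add: field_simps)
  moreover have "\<bar>\<alpha> - \<beta> / \<delta> * \<gamma>\<bar> \<le> \<bar>\<alpha>\<bar> + \<bar>\<beta>\<bar> / \<delta> * \<bar>\<gamma>\<bar>"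
    using assms(1) abs_triangle_ineq4[of \<alpha> "\<beta> / \<delta> * \<gamma>"] by (simp add: abs_mult)
  ultimately show "\<bar>\<alpha> - \<beta> / \<delta> * \<gamma>\<bar> \<le> D / 4" by linarith
qed

lemma parallelogram_contains_disc:
  fixes a b p q u e v :: "'a::real_inner"
  assumes K: "convex K" "a \<in> K" "b \<in> K" "p \<in> K" "q \<in> K"
    and ue: "norm u = 1" "norm e = 1" "u \<bullet> e = 0"
    and ab: "b - a = D *\<^sub>R u" and pq: "q - p = \<gamma> *\<^sub>R u + \<delta> *\<^sub>R e"
    and \<delta>: "0 < \<delta>" and D: "0 \<le> D" "\<gamma>\<^sup>2 + \<delta>\<^sup>2 \<le> D\<^sup>2"
    and v: "v \<in> span {u, e}" "norm v \<le> \<delta> / 4"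
  shows "(1/4) *\<^sub>R (a + b + p + q) + v \<in> K"
proof -
  define \<alpha> where "\<alpha> = v \<bullet> u"
  define \<beta> where "\<beta> = v \<bullet> e"
  have v_eq: "v = \<alpha> *\<^sub>R u + \<beta> *\<^sub>R e"
    unfolding \<alpha>_def \<beta>_def using orthonormal_pair_span_expansion[OF ue v(1)] .
  have "(norm v)\<^sup>2 = \<alpha>\<^sup>2 + \<beta>\<^sup>2"
    using norm_add_Pythagorean[of "\<alpha> *\<^sub>R u" "\<beta> *\<^sub>R e"] ue
    by (simp add: v_eq orthogonal_def power_mult_distrib)
  moreover have "(norm v)\<^sup>2 \<le> (\<delta> / 4)\<^sup>2" using v(2) by (simp add: power_mono)
  ultimately have "\<alpha>\<^sup>2 + \<beta>\<^sup>2 \<le> (\<delta> / 4)\<^sup>2" by simp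
  note coords = parallelogram_coordinates_bound[OF \<delta> D this]
  have "\<delta>\<^sup>2 \<le> D\<^sup>2" using D(2) zero_le_power2[of \<gamma>] by linarith
  then have "\<delta> \<le> D" using D(1) by (rule power2_le_imp_le)
  with \<delta> have "0 < D" by simp
  \<comment> \<open>The point is the midpoint of a point of [a, b] and a point of [p, q], with these parameters.\<close>
  define X where "X = \<alpha> - \<beta> / \<delta> * \<gamma>"
  define s where "s = 2 * X / D + 1/2"
  define t where "t = 2 * \<beta> / \<delta> + 1/2"
  have "\<bar>2 * X / D\<bar> \<le> 1/2"
    using coords(2) \<open>0 < D\<close> unfolding X_def[symmetric] by (simp add: abs_mult pos_divide_le_eq)
  then have "0 \<le> s" "s \<le> 1" unfolding s_def abs_le_iff by linarith+
  moreover have "0 \<le> t" "t \<le> 1"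
    using coords(1) \<delta> unfolding t_def by (auto simp: abs_le_iff field_simps)
  ultimately have "(1 - s) *\<^sub>R a + s *\<^sub>R b \<in> K" "(1 - t) *\<^sub>R p + t *\<^sub>R q \<in> K"
    using K by (auto intro: convexD)
  then have "(1/2) *\<^sub>R ((1 - s) *\<^sub>R a + s *\<^sub>R b) + (1/2) *\<^sub>R ((1 - t) *\<^sub>R p + t *\<^sub>R q) \<in> K"
    using convexD[OF K(1)] by simp
  moreover have "(1/2) *\<^sub>R ((1 - s) *\<^sub>R a + s *\<^sub>R b) + (1/2) *\<^sub>R ((1 - t) *\<^sub>R p + t *\<^sub>R q)
      = (1/2) *\<^sub>R a + (1/2) *\<^sub>R p + (s * D / 2 + t * \<gamma> / 2) *\<^sub>R u + (t * \<delta> / 2) *\<^sub>R e"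
    using ab pq by (simp add: algebra_simps eq_diff_eq)
  moreover have "(1/4) *\<^sub>R (a + b + p + q) + v
      = (1/2) *\<^sub>R a + (1/2) *\<^sub>R p + (D / 4 + \<gamma> / 4 + \<alpha>) *\<^sub>R u + (\<delta> / 4 + \<beta>) *\<^sub>R e"
  proof -
    have "a + b + p + q = 2 *\<^sub>R a + 2 *\<^sub>R p + (D + \<gamma>) *\<^sub>R u + \<delta> *\<^sub>R e"
      using ab pq by (simp add: algebra_simps eq_diff_eq scaleR_2)
    then show ?thesis unfolding v_eq by (simp add: algebra_simps)
  qed
  moreover have "s * D / 2 + t * \<gamma> / 2 = D / 4 + \<gamma> / 4 + \<alpha>" "t * \<delta> / 2 = \<delta> / 4 + \<beta>"
    unfolding s_def t_def X_def using \<delta> \<open>0 < D\<close> by (simp_all add: field_simps)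
  ultimately show ?thesis by simp
qed

lemma inner_radius_ge_quarter_width:
  fixes K :: "'a::euclidean_space set"
  assumes K: "convex K" "\<forall>y\<in>K. \<forall>z\<in>K. dist y z \<le> D"
    and ab: "a \<in> K" "b \<in> K" "norm u = 1" "b - a = D *\<^sub>R u"
    and pq: "p \<in> K" "q \<in> K"
    and \<delta>: "\<delta> = norm ((q - p) - (u \<bullet> (q - p)) *\<^sub>R u)" "0 < \<delta>"
  shows "\<delta> / 4 \<le> inner_radius 2 K"
proof -
  define \<gamma> where "\<gamma> = u \<bullet> (q - p)"
  define e where "e = (1 / \<delta>) *\<^sub>R ((q - p) - \<gamma> *\<^sub>R u)"
  have uu: "u \<bullet> u = 1" using ab(3) by (simp add: norm_eq_1)
  have ue: "u \<bullet> e = 0" unfolding e_def \<gamma>_def using uu by (simp add: inner_diff_right)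
  have ne: "norm e = 1" unfolding e_def \<gamma>_def using \<delta> by simp
  have qp: "q - p = \<gamma> *\<^sub>R u + \<delta> *\<^sub>R e" unfolding e_def using \<delta>(2) by simp
  have pyth: "(norm (q - p))\<^sup>2 = \<gamma>\<^sup>2 + \<delta>\<^sup>2"
    using norm_add_Pythagorean[of "\<gamma> *\<^sub>R u" "\<delta> *\<^sub>R e"] ab(3) ne ue
    by (simp add: qp orthogonal_def power_mult_distrib)
  have "dist p q \<le> D" "dist p p \<le> D" using K(2) pq by blast+
  then have "norm (q - p) \<le> D" "0 \<le> D" by (simp_all add: dist_norm norm_minus_commute)
  then have D: "\<gamma>\<^sup>2 + \<delta>\<^sup>2 \<le> D\<^sup>2" using power_mono[of "norm (q - p)" D 2] pyth by simp
  define L where "L = span {u, e}"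
  have L: "L \<in> lin_subspaces 2"
    unfolding L_def using span_orthonormal_pair_in_lin_subspaces[OF ab(3) ne ue] .
  define c0 where "c0 = (1/4) *\<^sub>R (a + b + p + q)"
  obtain y0 where y0: "y0 \<in> L" "c0 - y0 \<in> orth_compl L"
    using orth_compl_decomposition[of L c0] unfolding L_def by auto
  define x0 where "x0 = c0 - y0"
  have c0: "c0 \<in> (+) x0 ` L" using image_eqI[of c0 "(+) x0" y0] y0(1) unfolding x0_def by simp
  have disc: "cball c0 (\<delta> / 4) \<inter> (+) x0 ` L \<subseteq> K"
  proof
    fix y assume y: "y \<in> cball c0 (\<delta> / 4) \<inter> (+) x0 ` L"
    then obtain l where "l \<in> L" "y = x0 + l" by blast
    then have "y - c0 = l - y0" unfolding x0_def by simp
    then have "y - c0 \<in> span {u, e}" using span_diff \<open>l \<in> L\<close> y0(1) unfolding L_def by metis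
    moreover have "norm (y - c0) \<le> \<delta> / 4" using y by (simp add: dist_norm norm_minus_commute)
    ultimately have "c0 + (y - c0) \<in> K"
      unfolding c0_def
      by (rule parallelogram_contains_disc[OF K(1) ab(1,2) pq ab(3) ne ue ab(4) qp \<delta>(2) \<open>0 \<le> D\<close> D])
    then show "y \<in> K" by simp
  qed
  show ?thesis using inner_radius_ge[OF K(2) L y0(2)[folded x0_def] _ c0 disc] \<delta>(2) by simp
qed

section \<open>Projection along a diameter\<close>

lemma hyperplane_in_lin_subspaces:
  fixes u :: "'a::euclidean_space"
  assumes "u \<noteq> 0"
  shows "{x. u \<bullet> x = 0} \<in> lin_subspaces (DIM('a) - 1)"
  unfolding lin_subspaces_def using assms by (simp add: subspace_hyperplane dim_hyperplane)

lemma proj_onto_hyperplane_subset: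
  fixes u :: "'a::euclidean_space"
  assumes "norm u = 1"
  shows "proj_onto K {x. u \<bullet> x = 0} \<subseteq> (\<lambda>x. x - (u \<bullet> x) *\<^sub>R u) ` K"
proof
  fix y assume "y \<in> proj_onto K {x. u \<bullet> x = 0}"
  then obtain x where x: "x \<in> K" "u \<bullet> y = 0" "x - y \<in> orth_compl {x. u \<bullet> x = 0}"
    unfolding proj_onto_def by blast
  have uu: "u \<bullet> u = 1" using assms by (simp add: norm_eq_1)
  \<comment> \<open>m lies in the hyperplane, hence is orthogonal to x - y, which forces m = 0.\<close>
  define m where "m = (x - y) - (u \<bullet> (x - y)) *\<^sub>R u"
  have "u \<bullet> m = 0" unfolding m_def using uu by (simp add: inner_diff_right)
  then have "(x - y) \<bullet> m = 0" using x(3) unfolding orth_compl_def by blast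
  then have "m \<bullet> m = 0" using \<open>u \<bullet> m = 0\<close> unfolding m_def by (simp add: inner_diff_left)
  moreover have "u \<bullet> (x - y) = u \<bullet> x" using x(2) by (simp add: inner_diff_right)
  ultimately have "x - y = (u \<bullet> x) *\<^sub>R u" unfolding m_def by simp
  then have "y = x - (u \<bullet> x) *\<^sub>R u" by (simp add: algebra_simps)
  with x(1) show "y \<in> (\<lambda>x. x - (u \<bullet> x) *\<^sub>R u) ` K" by blast
qed

lemma outer_radius_le_projected_diameter:
  fixes K :: "'a::euclidean_space set"
  assumes K: "compact K" "K \<noteq> {}" and u: "norm u = 1"
    and width: "\<forall>p\<in>K. \<forall>q\<in>K. norm ((q - p) - (u \<bullet> (q - p)) *\<^sub>R u) \<le> W"
  shows "outer_radius (DIM('a) - 1) K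
           \<le> sqrt (real (DIM('a) - 1) / (2 * (real (DIM('a) - 1) + 1))) * W"
proof -
  define \<pi> where "\<pi> x = x - (u \<bullet> x) *\<^sub>R u" for x
  define H where "H = {x. u \<bullet> x = 0}"
  define S where "S = \<pi> ` K"
  have "dist (\<pi> p) (\<pi> q) = norm ((q - p) - (u \<bullet> (q - p)) *\<^sub>R u)" for p q
  proof -
    have "\<pi> q - \<pi> p = (q - p) - (u \<bullet> (q - p)) *\<^sub>R u"
      unfolding \<pi>_def by (simp add: inner_diff_right algebra_simps)
    then show ?thesis by (metis dist_norm dist_commute)
  qed
  then have diamS: "\<forall>y\<in>S. \<forall>z\<in>S. dist y z \<le> W" using width unfolding S_def by simp
  have "u \<noteq> 0" using u by auto
  have SH: "S \<subseteq> H"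
    unfolding S_def H_def \<pi>_def using u by (auto simp: inner_diff_right norm_eq_1)
  have S: "compact S" unfolding S_def \<pi>_def by (intro compact_continuous_image K(1) continuous_intros)
  have "S \<noteq> {}" unfolding S_def using K(2) by simp
  have "aff_dim S \<le> int (DIM('a) - 1)"
    using aff_dim_subset[OF SH] \<open>u \<noteq> 0\<close> unfolding H_def by simp
  obtain c where c: "c \<in> convex hull S"
    "\<And>s. s \<in> S \<Longrightarrow> dist c s \<le> sqrt (real (DIM('a) - 1) / (2 * (real (DIM('a) - 1) + 1))) * W"
    using jung[OF S \<open>S \<noteq> {}\<close> \<open>aff_dim S \<le> int (DIM('a) - 1)\<close> diamS] by auto
  have H: "H \<in> lin_subspaces (DIM('a) - 1)"
    unfolding H_def using hyperplane_in_lin_subspaces[OF \<open>u \<noteq> 0\<close>] .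
  have "convex hull S \<subseteq> H"
    by (rule hull_minimal[OF SH]) (simp add: H_def convex_hyperplane)
  with c(1) have "c \<in> H" ..
  have "proj_onto K H \<subseteq> S"
    unfolding H_def S_def \<pi>_def by (rule proj_onto_hyperplane_subset[OF u])
  also have "S \<subseteq> cball c (sqrt (real (DIM('a) - 1) / (2 * (real (DIM('a) - 1) + 1))) * W)"
    using c(2) by auto
  finally show ?thesis by (rule outer_radius_le[OF K(2) compact_imp_bounded[OF K(1)] H \<open>c \<in> H\<close>])
qed

lemma diameter_direction:
  fixes K :: "'a::euclidean_space set"
  assumes "compact K" "K \<noteq> {}"
  obtains a b u where "a \<in> K" "b \<in> K" "norm u = 1" "b - a = diameter K *\<^sub>R u"
proof -
  obtain a b where ab: "a \<in> K" "b \<in> K" "dist a b = diameter K"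
    using diameter_compact_attained[OF assms] by blast
  show thesis
  proof (cases "a = b")
    case True
    obtain e :: 'a where "e \<in> Basis" using nonempty_Basis by blast
    then show thesis using that[OF ab(1,2), of e] True ab(3) by simp
  next
    case False
    then have "0 < dist a b" by simp
    then have "0 < diameter K" using ab(3) by simp
    then show thesis using that[OF ab(1,2), of "(1 / diameter K) *\<^sub>R (b - a)"] ab(3)
      by (simp add: dist_norm norm_minus_commute)
  qed
qed

lemma jung_constant_eq:
  assumes "1 \<le> n"
  shows "sqrt (real (n - 1) / (2 * (real (n - 1) + 1))) * 4 = 2 * sqrt 2 * sqrt (real (n - 1) / real n)"
proof -
  have eq: "real (n - 1) / (2 * (real (n - 1) + 1)) = (real (n - 1) / real n) / 2"
    using assms by (simp add: of_nat_diff)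
  have "sqrt (real (n - 1) / (2 * (real (n - 1) + 1))) * 4
      = sqrt (real (n - 1) / real n) * (4 / sqrt 2)"
    unfolding eq by (simp add: real_sqrt_divide real_sqrt_mult)
  also have "4 / sqrt 2 = 2 * sqrt (2::real)"
    using real_sqrt_mult_self[of 2] by (simp add: field_simps)
  finally show ?thesis by simp
qed

lemma outer_radius_le_inner_radius:
  fixes K :: "'a::euclidean_space set"
  assumes K: "convex K" "compact K" "K \<noteq> {}" and r: "0 \<le> inner_radius 2 K"
  shows "outer_radius (DIM('a) - 1) K
           \<le> 2 * sqrt 2 * sqrt (real (DIM('a) - 1) / real DIM('a)) * inner_radius 2 K"
proof -
  obtain a b u where ab: "a \<in> K" "b \<in> K" "norm u = 1" "b - a = diameter K *\<^sub>R u"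
    using diameter_direction[OF K(2,3)] .
  have diam: "\<forall>y\<in>K. \<forall>z\<in>K. dist y z \<le> diameter K"
    using diameter_bounded_bound[OF compact_imp_bounded[OF K(2)]] by blast
  \<comment> \<open>A chord of K of width w transversal to the diameter [a, b] spans with it a disc of radius w / 4 in K.\<close>
  have "\<forall>p\<in>K. \<forall>q\<in>K. norm ((q - p) - (u \<bullet> (q - p)) *\<^sub>R u) \<le> 4 * inner_radius 2 K"
  proof (intro ballI)
    fix p q assume pq: "p \<in> K" "q \<in> K"
    show "norm ((q - p) - (u \<bullet> (q - p)) *\<^sub>R u) \<le> 4 * inner_radius 2 K"
    proof (cases "norm ((q - p) - (u \<bullet> (q - p)) *\<^sub>R u) = 0")
      case False
      then have "norm ((q - p) - (u \<bullet> (q - p)) *\<^sub>R u) / 4 \<le> inner_radius 2 K"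
        using inner_radius_ge_quarter_width[OF K(1) diam ab pq refl] by simp
      then show ?thesis by simp
    qed (use r in simp)
  qed
  then have "outer_radius (DIM('a) - 1) K
      \<le> sqrt (real (DIM('a) - 1) / (2 * (real (DIM('a) - 1) + 1))) * (4 * inner_radius 2 K)"
    by (rule outer_radius_le_projected_diameter[OF K(2,3) ab(3)])
  also have "\<dots> = 2 * sqrt 2 * sqrt (real (DIM('a) - 1) / real DIM('a)) * inner_radius 2 K"
    using jung_constant_eq[of "DIM('a)"] DIM_positive[where 'a='a]
    by (simp only: Suc_le_eq mult.assoc[symmetric])
  finally show ?thesis .
qed

section \<open>Radii of the empty set\<close>

lemma lin_subspaces_nonempty:
  assumes "i \<le> DIM('a::euclidean_space)"
  shows "lin_subspaces i \<noteq> ({} :: 'a set set)"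
proof -
  obtain B where B: "B \<subseteq> (Basis :: 'a set)" "card B = i"
    using obtain_subset_with_card_n[of i "Basis :: 'a set"] assms by auto
  then have "independent B" using independent_Basis independent_mono by blast
  then have "dim (span B) = i" using B(2) by (simp add: dim_eq_card_independent)
  then show ?thesis unfolding lin_subspaces_def by blast
qed

lemma Sup_UNIV_real: "Sup (UNIV :: real set) = Sup {}"
proof -
  have "(\<lambda>x::real. \<forall>y. y \<le> x) = (\<lambda>x. \<forall>y. x \<le> y)"
    by (rule ext) (meson gt_ex lt_ex not_le)
  then show ?thesis unfolding Sup_real_def Least_def by simp
qed

lemma inner_radius_empty:
  assumes "lin_subspaces 2 \<noteq> ({} :: 'a::euclidean_space set set)"
  shows "inner_radius 2 ({} :: 'a set) = Sup {}"
proof -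
  have empty: "inradius_in {} A = Sup {}" for A :: "'a set"
  proof -
    have "{r. 0 \<le> r \<and> (\<exists>c\<in>A. cball c r \<inter> A \<subseteq> {})} = {}"
      using centre_in_cball by blast
    then show ?thesis unfolding inradius_in_def by (simp only:)
  qed
  have "{inradius_in ({} \<inter> (+) x ` L) ((+) x ` L) |L x.
      L \<in> (lin_subspaces 2 :: 'a set set) \<and> x \<in> orth_compl L} = {Sup {} :: real}" (is "?X = _")
  proof
    show "?X \<subseteq> {Sup {}}" by (auto simp: empty)
    obtain L :: "'a set" where "L \<in> lin_subspaces 2" using assms by blast
    moreover have "(0::'a) \<in> orth_compl L" unfolding orth_compl_def by simp
    ultimately show "{Sup {}} \<subseteq> ?X" using empty[of "(+) 0 ` L"] by force
  qed
  then show ?thesis unfolding inner_radius_def by simp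
qed

lemma outer_radius_empty:
  assumes "lin_subspaces i \<noteq> ({} :: 'a::euclidean_space set set)"
  shows "outer_radius i ({} :: 'a set) = - Sup {}"
proof -
  have circ: "circumradius_in (proj_onto {} L) L = Inf UNIV" if "L \<in> lin_subspaces i" for L :: "'a set"
  proof -
    have "0 \<in> L" using that unfolding lin_subspaces_def by (simp add: subspace_0)
    then show ?thesis unfolding circumradius_in_def proj_onto_def by auto
  qed
  have "(\<lambda>L. circumradius_in (proj_onto {} L) L) ` (lin_subspaces i :: 'a set set)
      = (\<lambda>L. Inf UNIV :: real) ` (lin_subspaces i :: 'a set set)"
    by (rule image_cong) (simp_all add: circ)
  then have "(\<lambda>L. circumradius_in (proj_onto {} L) L) ` (lin_subspaces i :: 'a set set) = {Inf UNIV :: real}"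
    using assms by (simp add: image_constant_conv)
  then show ?thesis
    unfolding outer_radius_def by (simp add: Inf_real_def Sup_UNIV_real)
qed

theorem theorem1p2:
  fixes K :: "'a::euclidean_space set"
  assumes "DIM('a) \<ge> 2"
    and "convex_body K"
    and "inner_radius 2 K > 0"
  shows "outer_radius (DIM('a) - 1) K / inner_radius 2 K
           \<le> 2 * sqrt 2 * sqrt (real (DIM('a) - 1) / real (DIM('a)))"
proof (cases "K = {}")
  case True
  \<comment> \<open>Both radii of the empty set are junk values, Sup {} and - Sup {}, so the ratio is -1.\<close>
  have "lin_subspaces 2 \<noteq> ({} :: 'a set set)" "lin_subspaces (DIM('a) - 1) \<noteq> ({} :: 'a set set)"
    using assms(1) by (simp_all add: lin_subspaces_nonempty)
  then have "outer_radius (DIM('a) - 1) K / inner_radius 2 K = -1"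
    using True assms(3) by (simp add: inner_radius_empty outer_radius_empty)
  moreover have "0 \<le> 2 * sqrt 2 * sqrt (real (DIM('a) - 1) / real (DIM('a)))" by simp
  ultimately show ?thesis by linarith
next
  case False
  have "convex K" "compact K" using assms(2) unfolding convex_body_def by auto
  with False assms(3) show ?thesis
    using outer_radius_le_inner_radius[of K] by (simp add: pos_divide_le_eq)
qed

end
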